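(* Let $X$ be a finite set, let $F_X,F'_X$ be filtrations over $X$ and let $C_X=\Phi(F_X)$, $C'_X=\Phi(F'_X)$ be their facegrams. Then $d_{\mathrm{I}}(C_X,C'_X)=d_{\mathrm{I}}(F_X,F'_X)$.
   Context: $\mathbf{pow}(X)$ is the set of nonempty subsets of $X$; a filtration is an order-preserving map $F_X:(\mathbf{pow}(X),\subset)\to(\mathbb{R},\leq)$. A face-set of $X$ is a family of pairwise inclusion-incomparable nonempty subsets of $X$, ordered by $\mathcal{S}\leq\mathcal{S}'$ iff each face of $\mathcal{S}$ is contained in a face of $\mathcal{S}'$. The facegram of $F_X$ is $\Phi(F_X)(t):=$ the set of inclusion-maximal elements of $\{\sigma\in\mathbf{pow}(X)\mid F_X(\sigma)\leq t\}$. Interleaving distances: $d_{\mathrm{I}}(C_X,C'_X):=\inf\{\varepsilon\geq0\mid C_X(t)\leq C'_X(t+\varepsilon)\text{ and }C'_X(t)\leq C_X(t+\varepsilon)\ \forall t\in\mathbb{R}\}$ and $d_{\mathrm{I}}(F_X,F'_X):=\max_{\sigma\in\mathbf{pow}(X)}|F_X(\sigma)-F'_X(\sigma)|$. *)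

theory Defs
  imports Complex_Main
begin

definition powne :: "'a set \<Rightarrow> 'a set set" where
  "powne X = {\<sigma>. \<sigma> \<subseteq> X \<and> \<sigma> \<noteq> {}}"

definition filtration :: "'a set \<Rightarrow> ('a set \<Rightarrow> real) \<Rightarrow> bool" where
  "filtration X F \<longleftrightarrow> (\<forall>\<sigma>\<in>powne X. \<forall>\<tau>\<in>powne X. \<sigma> \<subseteq> \<tau> \<longrightarrow> F \<sigma> \<le> F \<tau>)"

definition face_set :: "'a set \<Rightarrow> 'a set set \<Rightarrow> bool" where
  "face_set X S \<longleftrightarrow> S \<subseteq> powne X \<and> (\<forall>\<sigma>\<in>S. \<forall>\<tau>\<in>S. \<sigma> \<subseteq> \<tau> \<longrightarrow> \<sigma> = \<tau>)"

definition face_le :: "'a set set \<Rightarrow> 'a set set \<Rightarrow> bool" where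
  "face_le S S' \<longleftrightarrow> (\<forall>\<sigma>\<in>S. \<exists>\<tau>\<in>S'. \<sigma> \<subseteq> \<tau>)"

definition facegram :: "'a set \<Rightarrow> ('a set \<Rightarrow> real) \<Rightarrow> real \<Rightarrow> 'a set set" where
  "facegram X F t = {\<sigma> \<in> powne X. F \<sigma> \<le> t \<and>
      (\<forall>\<tau>\<in>powne X. F \<tau> \<le> t \<and> \<sigma> \<subseteq> \<tau> \<longrightarrow> \<tau> = \<sigma>)}"

definition dI_facegram :: "(real \<Rightarrow> 'a set set) \<Rightarrow> (real \<Rightarrow> 'a set set) \<Rightarrow> real" where
  "dI_facegram C C' = Inf {\<epsilon>. \<epsilon> \<ge> 0 \<and>
      (\<forall>t. face_le (C t) (C' (t + \<epsilon>)) \<and> face_le (C' t) (C (t + \<epsilon>)))}"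

definition dI_filtration :: "'a set \<Rightarrow> ('a set \<Rightarrow> real) \<Rightarrow> ('a set \<Rightarrow> real) \<Rightarrow> real" where
  "dI_filtration X F F' = Max (insert 0 ((\<lambda>\<sigma>. \<bar>F \<sigma> - F' \<sigma>\<bar>) ` powne X))"

end

theory Submission
  imports Defs
begin

text \<open>A facegram records exactly the sublevel sets of its filtration: on a finite set every
  face of value at most t lies in a maximal such face, and conversely everything below a face
  of value at most t has value at most t by monotonicity. Hence
  \<open>\<Phi>(F)(t) \<le> \<Phi>(F')(t + \<epsilon>)\<close> says that \<open>F \<sigma> \<le> t\<close> implies \<open>F' \<sigma> \<le> t + \<epsilon>\<close>, and requiring this in both
  directions for all t amounts to \<open>\<bar>F \<sigma> - F' \<sigma>\<bar> \<le> \<epsilon>\<close> for every \<open>\<sigma>\<close>. So the admissible \<open>\<epsilon>\<close> for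
  the facegrams form the ray \<open>[d\<^sub>I(F, F'), \<infinity>)\<close>, whose infimum is its left end.\<close>

lemma finite_powne: "finite X \<Longrightarrow> finite (powne X)"
  unfolding powne_def by (rule finite_subset[of _ "Pow X"]) auto

lemma facegram_covers_sublevel:
  assumes "finite X" "\<sigma> \<in> powne X" "F \<sigma> \<le> t"
  shows "\<exists>\<mu>\<in>facegram X F t. \<sigma> \<subseteq> \<mu>"
proof -
  let ?K = "{\<tau> \<in> powne X. F \<tau> \<le> t}"
  have "finite ?K" using finite_powne[OF assms(1)] by simp
  then obtain \<mu> where "\<mu> \<in> ?K" "\<sigma> \<subseteq> \<mu>" "\<forall>\<tau>\<in>?K. \<mu> \<subseteq> \<tau> \<longrightarrow> \<mu> = \<tau>"
    using finite_has_maximal2[of ?K \<sigma>] assms(2,3) by auto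
  then show ?thesis unfolding facegram_def by auto
qed

lemma face_le_facegram_iff:
  assumes "finite X" "filtration X F'"
  shows "face_le (facegram X F t) (facegram X F' s) \<longleftrightarrow>
    (\<forall>\<sigma>\<in>powne X. F \<sigma> \<le> t \<longrightarrow> F' \<sigma> \<le> s)"
proof
  assume le: "face_le (facegram X F t) (facegram X F' s)"
  show "\<forall>\<sigma>\<in>powne X. F \<sigma> \<le> t \<longrightarrow> F' \<sigma> \<le> s"
  proof (intro ballI impI)
    fix \<sigma> assume \<sigma>: "\<sigma> \<in> powne X" "F \<sigma> \<le> t"
    obtain \<mu> where \<mu>: "\<mu> \<in> facegram X F t" "\<sigma> \<subseteq> \<mu>"
      using facegram_covers_sublevel[of X \<sigma> F t] assms(1) \<sigma> by blast
    then obtain \<tau> where \<tau>: "\<tau> \<in> facegram X F' s" "\<mu> \<subseteq> \<tau>"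
      using le unfolding face_le_def by blast
    have "F' \<sigma> \<le> F' \<tau>"
      using assms(2) \<sigma>(1) \<mu>(2) \<tau> unfolding filtration_def facegram_def by auto
    also have "\<dots> \<le> s" using \<tau>(1) unfolding facegram_def by simp
    finally show "F' \<sigma> \<le> s" .
  qed
next
  assume "\<forall>\<sigma>\<in>powne X. F \<sigma> \<le> t \<longrightarrow> F' \<sigma> \<le> s"
  then show "face_le (facegram X F t) (facegram X F' s)"
    using facegram_covers_sublevel[OF assms(1), of _ F' s]
    unfolding face_le_def facegram_def by blast
qed

lemma sublevel_shifts_iff_abs_diff_le:
  fixes f g :: "'b \<Rightarrow> real"
  shows "(\<forall>t. \<forall>x\<in>A. (f x \<le> t \<longrightarrow> g x \<le> t + e) \<and> (g x \<le> t \<longrightarrow> f x \<le> t + e))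
    \<longleftrightarrow> (\<forall>x\<in>A. \<bar>f x - g x\<bar> \<le> e)"
proof
  assume shifts: "\<forall>t. \<forall>x\<in>A. (f x \<le> t \<longrightarrow> g x \<le> t + e) \<and> (g x \<le> t \<longrightarrow> f x \<le> t + e)"
  show "\<forall>x\<in>A. \<bar>f x - g x\<bar> \<le> e"
  proof
    fix x assume "x \<in> A"
    then have "g x \<le> f x + e" "f x \<le> g x + e"
      using shifts[THEN spec, of "f x"] shifts[THEN spec, of "g x"] by auto
    then show "\<bar>f x - g x\<bar> \<le> e" by linarith
  qed
qed auto

lemma facegrams_interleaved_iff:
  assumes "finite X" "filtration X F" "filtration X F'"
  shows "(\<forall>t. face_le (facegram X F t) (facegram X F' (t + e))
              \<and> face_le (facegram X F' t) (facegram X F (t + e)))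
    \<longleftrightarrow> (\<forall>\<sigma>\<in>powne X. \<bar>F \<sigma> - F' \<sigma>\<bar> \<le> e)"
  using face_le_facegram_iff[OF assms(1,3), of F] face_le_facegram_iff[OF assms(1,2), of F']
    sublevel_shifts_iff_abs_diff_le[of "powne X" F F' e]
  by auto

lemma dI_filtration_le_iff:
  assumes "finite X"
  shows "dI_filtration X F F' \<le> e \<longleftrightarrow> 0 \<le> e \<and> (\<forall>\<sigma>\<in>powne X. \<bar>F \<sigma> - F' \<sigma>\<bar> \<le> e)"
  unfolding dI_filtration_def using finite_powne[OF assms] by simp

theorem mainTheorem8:
  fixes X :: "'a set" and F F' :: "'a set \<Rightarrow> real"
  assumes "finite X"
    and "filtration X F" and "filtration X F'"
  shows "dI_facegram (facegram X F) (facegram X F') = dI_filtration X F F'"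
proof -
  have "{e. e \<ge> 0 \<and> (\<forall>t. face_le (facegram X F t) (facegram X F' (t + e))
                          \<and> face_le (facegram X F' t) (facegram X F (t + e)))}
      = {dI_filtration X F F'..}"
    using facegrams_interleaved_iff[OF assms] dI_filtration_le_iff[OF assms(1)] by auto
  then show ?thesis unfolding dI_facegram_def by simp
qed

end
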